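(* For each $k\in\{1,2,3,4\}$ there exists at least one finite simple graph $G$ with independence number four such that $\mathcal{A}(G)=[-\frac{4}{k},0]$. Further, for $k\in\{1,2\}$ there is no disconnected graph with independence number four whose independence attractor is $[-\frac{4}{k},0]$.
   Context: For a finite simple graph $G$, an independent set is a set of pairwise non-adjacent vertices. The independence polynomial is $I_G(z)=\sum_{i=0}^{\alpha} a_i z^i$, where $a_i$ is the number of independent sets of cardinality $i$ and $\alpha$ (the independence number) is the largest cardinality of an independent set. The lexicographic product $G[H]$ has vertex set $V(G)\times V(H)$, with $(u,v)\sim(u',v')$ iff $u\sim u'$ in $G$, or $u=u'$ and $v\sim v'$ in $H$. Let $G^m$ denote the $m$-fold lexicographic product of $G$ with itself. The independence attractor is $\mathcal{A}(G)=\lim_{m\to\infty}\{z\in\mathbb{C}: I_{G^m}(z)=0\}$, the limit taken in the Hausdorff metric on nonempty compact subsets of $\mathbb{C}$. *)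

theory Defs
  imports "HOL-Analysis.Analysis"
begin

definition simple_graph :: "'a set \<Rightarrow> ('a \<Rightarrow> 'a \<Rightarrow> bool) \<Rightarrow> bool" where
  "simple_graph V E \<longleftrightarrow> finite V \<and> (\<forall>x. \<not> E x x) \<and> (\<forall>x y. E x y \<longrightarrow> E y x)
     \<and> (\<forall>x y. E x y \<longrightarrow> x \<in> V \<and> y \<in> V)"

definition indep_set :: "'a set \<Rightarrow> ('a \<Rightarrow> 'a \<Rightarrow> bool) \<Rightarrow> 'a set \<Rightarrow> bool" where
  "indep_set V E S \<longleftrightarrow> S \<subseteq> V \<and> (\<forall>x\<in>S. \<forall>y\<in>S. \<not> E x y)"

definition indep_number :: "'a set \<Rightarrow> ('a \<Rightarrow> 'a \<Rightarrow> bool) \<Rightarrow> nat" where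
  "indep_number V E = Max (card ` {S. indep_set V E S})"

definition indep_poly :: "'a set \<Rightarrow> ('a \<Rightarrow> 'a \<Rightarrow> bool) \<Rightarrow> complex \<Rightarrow> complex" where
  "indep_poly V E z =
     (\<Sum>i\<le>indep_number V E. of_nat (card {S. indep_set V E S \<and> card S = i}) * z ^ i)"

definition graph_connected :: "'a set \<Rightarrow> ('a \<Rightarrow> 'a \<Rightarrow> bool) \<Rightarrow> bool" where
  "graph_connected V E \<longleftrightarrow> V \<noteq> {} \<and> (\<forall>u\<in>V. \<forall>v\<in>V. E\<^sup>*\<^sup>* u v)"

text \<open>m-fold lexicographic power G^m = G[G[...G]]: vertices are lists of length m
over V, the first entry being the outermost coordinate.\<close>
fun lex_adj :: "('a \<Rightarrow> 'a \<Rightarrow> bool) \<Rightarrow> 'a list \<Rightarrow> 'a list \<Rightarrow> bool" where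
  "lex_adj E (u # us) (v # vs) = (E u v \<or> (u = v \<and> lex_adj E us vs))"
| "lex_adj E _ _ = False"

definition lex_pow_V :: "'a set \<Rightarrow> nat \<Rightarrow> 'a list set" where
  "lex_pow_V V m = {xs. length xs = m \<and> set xs \<subseteq> V}"

definition indep_roots :: "'a set \<Rightarrow> ('a \<Rightarrow> 'a \<Rightarrow> bool) \<Rightarrow> complex set" where
  "indep_roots V E = {z. indep_poly V E z = 0}"

definition hausdorff_dist :: "'a::metric_space set \<Rightarrow> 'a set \<Rightarrow> real" where
  "hausdorff_dist A B = max (SUP a\<in>A. infdist a B) (SUP b\<in>B. infdist b A)"

definition indep_attractor_is :: "'a set \<Rightarrow> ('a \<Rightarrow> 'a \<Rightarrow> bool) \<Rightarrow> complex set \<Rightarrow> bool" where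
  "indep_attractor_is V E A \<longleftrightarrow> compact A \<and> A \<noteq> {} \<and>
     (\<forall>\<^sub>F m in sequentially. indep_roots (lex_pow_V V m) (lex_adj E) \<noteq> {}) \<and>
     ((\<lambda>m. hausdorff_dist (indep_roots (lex_pow_V V m) (lex_adj E)) A) \<longlonglongrightarrow> 0)"

end

(*
  Since I_{G[H]} = I_G o (I_H - 1), the roots of I_{G^m} are the preimages of -1 under the
  m-th iterate of f = I_G - 1. When I_G = 1 + 16 w (1 + k w / 2)^2 (1 + k w / 4), the map f is
  the Chebyshev polynomial T_4 written in the coordinate w = (2 / k) (cos t - 1), hence conjugate
  to t \<mapsto> 4 t; its iterated preimages of -1 are real and fill [-4/k, 0] with mesh O(4^-m).
  Cographs realise this independence polynomial for k = 1, ..., 4.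

  Conversely, if the root sets converge to a compact S, then f maps S into S and f^-1(S) is
  contained in S. For S = [-4/k, 0] and f of degree 4 the resulting sign conditions on [-4/k, 0]
  force f to be the quartic above. A disconnected G would factor I_G into two independence
  polynomials with natural coefficients and constant term 1, which for k = 1, 2 is ruled out by
  comparing coefficients.
*)

theory Submission
  imports Defs "HOL-Computational_Algebra.Fundamental_Theorem_Algebra"
begin

section \<open>Independence polynomials\<close>

definition indep_count :: "'a set \<Rightarrow> ('a \<Rightarrow> 'a \<Rightarrow> bool) \<Rightarrow> nat \<Rightarrow> nat" where
  "indep_count V E i = card {S. indep_set V E S \<and> card S = i}"

definition indep_polynomial :: "'a set \<Rightarrow> ('a \<Rightarrow> 'a \<Rightarrow> bool) \<Rightarrow> complex poly" where
  "indep_polynomial V E = (\<Sum>S\<in>{S. indep_set V E S}. monom 1 (card S))"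

lemma finite_indep_sets: "finite V \<Longrightarrow> finite {S. indep_set V E S}"
  by (rule finite_subset[of _ "Pow V"]) (auto simp: indep_set_def)

lemma indep_set_empty [simp]: "indep_set V E {}"
  by (simp add: indep_set_def)

lemma indep_sets_card_0:
  assumes "finite V"
  shows "{S. indep_set V E S \<and> card S = 0} = {{}}"
proof (intro equalityI subsetI)
  fix S assume "S \<in> {S. indep_set V E S \<and> card S = 0}"
  then have "S \<subseteq> V" "card S = 0" by (auto simp: indep_set_def)
  then show "S \<in> {{}}" using assms finite_subset by fastforce
qed simp

lemma indep_polynomial_empty [simp]: "indep_polynomial {} E = 1"
proof -
  have "{S. indep_set {} E S} = {{}}" by (auto simp: indep_set_def)
  then show ?thesis by (simp add: indep_polynomial_def)
qed

lemma indep_polynomial_singleton: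
  assumes "\<not> E v v"
  shows "indep_polynomial {v} E = [:1, 1:]"
proof -
  have "{S. indep_set {v} E S} = {{}, {v}}" using assms by (auto simp: indep_set_def)
  then show ?thesis by (simp add: indep_polynomial_def monom_Suc one_pCons)
qed

lemma coeff_indep_polynomial:
  assumes "finite V"
  shows "coeff (indep_polynomial V E) i = of_nat (indep_count V E i)"
proof -
  have "coeff (indep_polynomial V E) i = (\<Sum>S\<in>{S. indep_set V E S}. if card S = i then 1 else 0)"
    by (simp add: indep_polynomial_def coeff_sum coeff_monom eq_commute)
  also have "\<dots> = of_nat (card {S \<in> {S. indep_set V E S}. card S = i})"
    using finite_indep_sets[OF assms] by (simp add: sum.If_cases Int_def)
  finally show ?thesis by (simp add: indep_count_def)
qed

lemma indep_count_0: "finite V \<Longrightarrow> indep_count V E 0 = 1"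
  by (simp add: indep_count_def indep_sets_card_0)

lemma degree_minus_1:
  fixes p :: "'a::comm_ring_1 poly"
  assumes "0 < degree p"
  shows "degree (p - 1) = degree p" "lead_coeff (p - 1) = lead_coeff p"
proof -
  show deg: "degree (p - 1) = degree p"
    unfolding diff_conv_add_uminus using assms by (subst degree_add_eq_left) auto
  show "lead_coeff (p - 1) = lead_coeff p"
    unfolding deg using assms by simp
qed

lemma indep_polynomial_nonzero: "finite V \<Longrightarrow> indep_polynomial V E \<noteq> 0"
  by (metis coeff_0 coeff_indep_polynomial indep_count_0 of_nat_1 one_neq_zero)

lemma card_indep_le_indep_number:
  assumes "finite V" "indep_set V E S"
  shows "card S \<le> indep_number V E"
  unfolding indep_number_def using assms finite_indep_sets[OF assms(1)]
  by (intro Max_ge) auto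

lemma indep_number_attained:
  assumes "finite V"
  obtains S where "indep_set V E S" "card S = indep_number V E"
proof -
  have "indep_number V E \<in> card ` {S. indep_set V E S}"
    unfolding indep_number_def using finite_indep_sets[OF assms]
    by (intro Max_in) (auto intro: indep_set_empty)
  then show ?thesis using that by auto
qed

lemma indep_count_above_indep_number:
  assumes "finite V" "indep_number V E < i"
  shows "indep_count V E i = 0"
proof -
  have "card S \<noteq> i" if "indep_set V E S" for S
    using card_indep_le_indep_number[OF assms(1) that] assms(2) by linarith
  then have "{S. indep_set V E S \<and> card S = i} = {}" by blast
  then show ?thesis by (simp only: indep_count_def card.empty)
qed

lemma degree_indep_polynomial:
  assumes "finite V"
  shows "degree (indep_polynomial V E) = indep_number V E"
proof (rule antisym)
  show "degree (indep_polynomial V E) \<le> indep_number V E"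
    by (rule degree_le) (simp add: coeff_indep_polynomial[OF assms] indep_count_above_indep_number[OF assms])
  obtain S where S: "indep_set V E S" "card S = indep_number V E"
    using indep_number_attained[OF assms] by blast
  have "finite {S. indep_set V E S \<and> card S = indep_number V E}"
    using finite_indep_sets[OF assms] by (rule finite_subset[rotated]) auto
  then have "indep_count V E (indep_number V E) \<noteq> 0"
    using S by (auto simp: indep_count_def)
  then show "indep_number V E \<le> degree (indep_polynomial V E)"
    by (intro le_degree) (simp add: coeff_indep_polynomial[OF assms])
qed

lemma indep_number_pos:
  assumes "finite V" "\<And>x. \<not> E x x" "V \<noteq> {}"
  shows "0 < indep_number V E"
proof -
  obtain v where "v \<in> V" using assms(3) by blast
  then have "indep_set V E {v}" using assms(2) by (simp add: indep_set_def)
  then show ?thesis using card_indep_le_indep_number[OF assms(1)] by fastforce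
qed

lemma poly_indep_polynomial:
  assumes "finite V"
  shows "poly (indep_polynomial V E) z = indep_poly V E z"
  by (simp add: poly_altdef indep_poly_def degree_indep_polynomial[OF assms]
      coeff_indep_polynomial[OF assms] indep_count_def)

lemma indep_sets_module_decomp:
  assumes X: "X \<subseteq> W" and N: "N \<subseteq> W - X"
    and module: "\<And>x y. x \<in> X \<Longrightarrow> y \<in> W - X \<Longrightarrow> (E x y \<or> E y x) \<longleftrightarrow> y \<in> N"
  shows "{S. indep_set W E S} = {S. indep_set (W - X) E S} \<union>
           (\<lambda>(U, T). U \<union> T) ` (({U. indep_set X E U} - {{}}) \<times> {T. indep_set (W - X - N) E T})"
    (is "?L = ?A \<union> ?B")
proof (intro equalityI subsetI)
  fix S assume S: "S \<in> ?L"
  show "S \<in> ?A \<union> ?B"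
  proof (cases "S \<inter> X = {}")
    case True
    then show ?thesis using S by (auto simp: indep_set_def)
  next
    case False
    then obtain x where x: "x \<in> S" "x \<in> X" by auto
    have "y \<notin> N" if "y \<in> S - X" for y
    proof -
      have "y \<in> W - X" "\<not> (E x y \<or> E y x)" using x that S by (auto simp: indep_set_def)
      then show ?thesis using module[OF x(2)] by blast
    qed
    then have "(S \<inter> X, S - X) \<in> ({U. indep_set X E U} - {{}}) \<times> {T. indep_set (W - X - N) E T}"
      using S False by (auto simp: indep_set_def)
    moreover have "S = (\<lambda>(U, T). U \<union> T) (S \<inter> X, S - X)" by auto
    ultimately show ?thesis by blast
  qed
next
  fix S assume "S \<in> ?A \<union> ?B"
  then show "S \<in> ?L"
  proof
    assume "S \<in> ?B"
    then obtain U T where S: "S = U \<union> T" "indep_set X E U" "indep_set (W - X - N) E T"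
      by auto
    have "\<not> (E a b \<or> E b a)" if "a \<in> U" "b \<in> T" for a b
      using that S module[of a b] by (auto simp: indep_set_def)
    then show "S \<in> ?L" using S X by (auto simp: indep_set_def)
  qed (auto simp: indep_set_def)
qed

lemma indep_polynomial_module:
  assumes fin: "finite W" and X: "X \<subseteq> W" and N: "N \<subseteq> W - X"
    and module: "\<And>x y. x \<in> X \<Longrightarrow> y \<in> W - X \<Longrightarrow> (E x y \<or> E y x) \<longleftrightarrow> y \<in> N"
  shows "indep_polynomial W E =
           indep_polynomial (W - X) E + (indep_polynomial X E - 1) * indep_polynomial (W - X - N) E"
proof -
  let ?I = "\<lambda>A. {S. indep_set A E S}"
  let ?P = "(?I X - {{}}) \<times> ?I (W - X - N)"
  let ?x = "\<lambda>S. monom (1::complex) (card S)"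
  have finX: "finite (?I X)" and finN: "finite (?I (W - X - N))"
    using fin X by (auto intro: finite_indep_sets finite_subset)
  have inj: "inj_on (\<lambda>(U, T). U \<union> T) ?P"
    by (rule inj_onI) (auto simp: indep_set_def)
  have card_Un: "card (U \<union> T) = card U + card T" if "(U, T) \<in> ?P" for U T
  proof -
    have "U \<subseteq> W" "T \<subseteq> W" "U \<inter> T = {}" using that X by (auto simp: indep_set_def)
    then show ?thesis using fin by (meson card_Un_disjoint finite_subset)
  qed
  have "indep_polynomial X E - 1 = (\<Sum>U\<in>?I X - {{}}. ?x U)"
    unfolding indep_polynomial_def using finX by (subst sum.remove[of _ "{}"]) auto
  then have "(indep_polynomial X E - 1) * indep_polynomial (W - X - N) E = (\<Sum>(U, T)\<in>?P. ?x U * ?x T)"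
    by (simp add: indep_polynomial_def sum_product sum.cartesian_product)
  also have "\<dots> = (\<Sum>(U, T)\<in>?P. ?x (U \<union> T))"
  proof (rule sum.cong[OF refl])
    fix p assume "p \<in> ?P"
    then show "(case p of (U, T) \<Rightarrow> ?x U * ?x T) = (case p of (U, T) \<Rightarrow> ?x (U \<union> T))"
      by (cases p) (simp add: mult_monom card_Un)
  qed
  also have "\<dots> = (\<Sum>S\<in>(\<lambda>(U, T). U \<union> T) ` ?P. ?x S)"
    using inj by (simp add: sum.reindex case_prod_unfold)
  finally have "(indep_polynomial X E - 1) * indep_polynomial (W - X - N) E =
      (\<Sum>S\<in>(\<lambda>(U, T). U \<union> T) ` ?P. ?x S)" .
  moreover have "indep_polynomial W E = indep_polynomial (W - X) E + (\<Sum>S\<in>(\<lambda>(U, T). U \<union> T) ` ?P. ?x S)"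
  proof -
    have "?I W = ?I (W - X) \<union> (\<lambda>(U, T). U \<union> T) ` ?P"
      by (rule indep_sets_module_decomp[OF X N module])
    moreover have "?I (W - X) \<inter> (\<lambda>(U, T). U \<union> T) ` ?P = {}"
      by (auto simp: indep_set_def)
    ultimately show ?thesis
      unfolding indep_polynomial_def using fin finX finN
      by (simp add: sum.union_disjoint finite_indep_sets)
  qed
  ultimately show ?thesis by simp
qed

lemma indep_polynomial_image:
  assumes "inj_on f W"
  shows "indep_polynomial (f ` W) E = indep_polynomial W (\<lambda>x y. E (f x) (f y))"
proof -
  let ?E' = "\<lambda>x y. E (f x) (f y)"
  have sets: "{S. indep_set (f ` W) E S} = (`) f ` {S. indep_set W ?E' S}"
  proof (intro equalityI subsetI)
    fix T assume T: "T \<in> {S. indep_set (f ` W) E S}"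
    then have "T = f ` (W \<inter> f -` T)" "indep_set W ?E' (W \<inter> f -` T)"
      by (auto simp: indep_set_def)
    then show "T \<in> (`) f ` {S. indep_set W ?E' S}" by blast
  qed (auto simp: indep_set_def)
  have inj: "inj_on ((`) f) {S. indep_set W ?E' S}"
    by (rule inj_on_subset[OF inj_on_image_Pow[OF assms]]) (auto simp: indep_set_def)
  have "card (f ` S) = card S" if "indep_set W ?E' S" for S
    using that assms by (intro card_image) (auto simp: indep_set_def intro: inj_on_subset)
  then show ?thesis unfolding indep_polynomial_def sets using inj by (simp add: sum.reindex)
qed

lemma indep_polynomial_no_edges_between:
  assumes "finite V" "A \<subseteq> V" "\<And>x y. x \<in> A \<Longrightarrow> y \<in> V - A \<Longrightarrow> \<not> E x y \<and> \<not> E y x"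
  shows "indep_polynomial V E = indep_polynomial A E * indep_polynomial (V - A) E"
  using indep_polynomial_module[of V A "{}" E] assms by (simp add: algebra_simps)

lemma indep_polynomial_complete_between:
  assumes "finite V" "A \<subseteq> V" "\<And>x y. x \<in> A \<Longrightarrow> y \<in> V - A \<Longrightarrow> E x y"
  shows "indep_polynomial V E = indep_polynomial A E + indep_polynomial (V - A) E - 1"
  using indep_polynomial_module[of V A "V - A" E] assms by (simp add: algebra_simps)

section \<open>Lexicographic powers\<close>

lemma lex_pow_V_0: "lex_pow_V V 0 = {[]}"
  by (auto simp: lex_pow_V_def)

lemma lex_pow_V_Suc: "lex_pow_V V (Suc m) = (\<lambda>(u, xs). u # xs) ` (V \<times> lex_pow_V V m)"
proof (intro equalityI subsetI)
  fix xs assume "xs \<in> lex_pow_V V (Suc m)"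
  then show "xs \<in> (\<lambda>(u, xs). u # xs) ` (V \<times> lex_pow_V V m)"
    by (cases xs) (auto simp: lex_pow_V_def)
qed (auto simp: lex_pow_V_def)

lemma finite_lex_pow_V: "finite V \<Longrightarrow> finite (lex_pow_V V m)"
  unfolding lex_pow_V_def using finite_lists_length_eq[of V m] by (simp add: conj_commute)

text \<open>Deleting a vertex \<open>v\<close>: \<open>{v}\<close> is a module of \<open>G\<close> and \<open>v \<times> W\<close> a module of \<open>G[H]\<close>,
  so both sides obey the same recurrence, with \<open>w\<close> replaced by \<open>I\<^sub>H - 1\<close>.\<close>

lemma indep_polynomial_lex_product:
  assumes "finite V" "finite W" "\<And>x. \<not> E x x"
  shows "indep_polynomial ((\<lambda>(u, xs). u # xs) ` (V \<times> W)) (lex_adj E) =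
           pcompose (indep_polynomial V E) (indep_polynomial W (lex_adj E) - 1)"
  using assms(1)
proof (induction V rule: finite_psubset_induct)
  case (psubset V)
  let ?F = "\<lambda>A. (\<lambda>(u, xs). u # xs) ` (A \<times> W)"
  let ?I = "\<lambda>A. indep_polynomial A E" and ?J = "\<lambda>A. indep_polynomial A (lex_adj E)"
  show ?case
  proof (cases "V = {}")
    case True
    then show ?thesis by (simp add: one_pCons pcompose_pCons)
  next
    case False
    then obtain v where v: "v \<in> V" by auto
    define N where "N = {u \<in> V - {v}. E v u \<or> E u v}"
    have IV: "?I V = ?I (V - {v}) + [:0, 1:] * ?I (V - {v} - N)"
      using indep_polynomial_module[of V "{v}" N E] psubset.hyps v assms(3)
      by (auto simp: N_def indep_polynomial_singleton one_pCons)
    have "?J (?F V) = ?J (?F V - Cons v ` W) + (?J (Cons v ` W) - 1) * ?J (?F V - Cons v ` W - ?F N)"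
    proof (rule indep_polynomial_module)
      show "finite (?F V)" using psubset.hyps assms(2) by simp
      show "Cons v ` W \<subseteq> ?F V" "?F N \<subseteq> ?F V - Cons v ` W" using v by (auto simp: N_def)
      fix x y assume "x \<in> Cons v ` W" "y \<in> ?F V - Cons v ` W"
      then obtain xs u ys where "x = v # xs" "y = u # ys" "u \<in> V" "ys \<in> W" "u \<noteq> v" by auto
      then show "(lex_adj E x y \<or> lex_adj E y x) \<longleftrightarrow> y \<in> ?F N" by (auto simp: N_def)
    qed
    moreover have "?F V - Cons v ` W = ?F (V - {v})" "?F (V - {v}) - ?F N = ?F (V - {v} - N)"
      by (auto simp: N_def)
    moreover have "?J (Cons v ` W) = ?J W"
      by (subst indep_polynomial_image) (auto simp: assms(3))
    ultimately have JV: "?J (?F V) = ?J (?F (V - {v})) + (?J W - 1) * ?J (?F (V - {v} - N))"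
      by simp
    have "V - {v} \<subset> V" "V - {v} - N \<subset> V" using v by auto
    then show ?thesis
      unfolding JV IV using psubset.IH
      by (simp add: pcompose_add pcompose_mult pcompose_pCons)
  qed
qed

lemma indep_polynomial_lex_pow:
  assumes "finite V" "\<And>x. \<not> E x x"
  shows "poly (indep_polynomial (lex_pow_V V m) (lex_adj E)) z - 1 =
           ((\<lambda>w. poly (indep_polynomial V E) w - 1) ^^ m) z"
proof (induction m)
  case 0
  then show ?case by (simp add: lex_pow_V_0 indep_polynomial_singleton)
next
  case (Suc m)
  then show ?case
    using assms by (simp add: lex_pow_V_Suc indep_polynomial_lex_product finite_lex_pow_V poly_pcompose)
qed

lemma indep_roots_lex_pow:
  assumes fin: "finite V" and irrefl: "\<And>x. \<not> E x x"
  shows "indep_roots (lex_pow_V V m) (lex_adj E) =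
           {z. ((\<lambda>w. poly (indep_polynomial V E) w - 1) ^^ m) z = -1}"
proof -
  have "((\<lambda>w. poly (indep_polynomial V E) w - 1) ^^ m) z = -1 \<longleftrightarrow>
      poly (indep_polynomial (lex_pow_V V m) (lex_adj E)) z = 0" for z
    unfolding indep_polynomial_lex_pow[OF fin irrefl, symmetric] by auto
  then show ?thesis
    by (auto simp: indep_roots_def poly_indep_polynomial[OF finite_lex_pow_V[OF fin]])
qed

section \<open>A quartic conjugate to \<open>t \<mapsto> 4 t\<close>\<close>

lemma closed_segment_neg_real_0:
  assumes "0 \<le> L"
  shows "closed_segment (complex_of_real (- L)) 0 = of_real ` {- L..0}"
  using assms by (metis closed_segment_eq_real_ivl1 closed_segment_of_real neg_le_0_iff_le of_real_0)

lemma mem_closed_segment_neg_real_0: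
  assumes "0 \<le> L"
  shows "z \<in> closed_segment (complex_of_real (- L)) 0 \<longleftrightarrow> Im z = 0 \<and> - L \<le> Re z \<and> Re z \<le> 0"
  unfolding closed_segment_neg_real_0[OF assms] by (auto simp: complex_eq_iff image_iff)

lemma hausdorff_dist_subset_le:
  fixes R S :: "'a::metric_space set"
  assumes "R \<subseteq> S" "R \<noteq> {}" "S \<noteq> {}" "\<And>s. s \<in> S \<Longrightarrow> infdist s R \<le> B"
  shows "0 \<le> hausdorff_dist R S" "hausdorff_dist R S \<le> B"
proof -
  have "(SUP r\<in>R. infdist r S) = (SUP r\<in>R. 0)"
    using assms(1) by (intro SUP_cong) (auto intro: infdist_zero)
  then have "(SUP r\<in>R. infdist r S) = 0" using assms(2) by simp
  moreover have "(SUP s\<in>S. infdist s R) \<le> B" using assms(3,4) by (intro cSUP_least) auto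
  ultimately show "0 \<le> hausdorff_dist R S" "hausdorff_dist R S \<le> B"
    unfolding hausdorff_dist_def using assms(3,4) infdist_nonneg by (auto intro: order_trans)
qed

lemma cos_quadruple: "cos (4 * t) = 8 * cos t ^ 4 - 8 * cos t ^ 2 + (1 :: complex)"
proof -
  have "cos (4 * t) = 2 * cos (2 * t) ^ 2 - 1"
    using cos_double_cos[of "2 * t"] by (simp add: mult.assoc)
  also have "cos (2 * t) = 2 * cos t ^ 2 - 1" by (rule cos_double_cos)
  finally show ?thesis by (simp add: power2_eq_square power4_eq_xxxx algebra_simps)
qed

lemma cos_lipschitz: "\<bar>cos a - cos b\<bar> \<le> \<bar>a - b\<bar>" for a b :: real
proof -
  have "\<bar>cos a - cos b\<bar> = 2 * \<bar>sin ((a + b) / 2)\<bar> * \<bar>sin ((b - a) / 2)\<bar>"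
    by (simp add: cos_diff_cos abs_mult)
  also have "\<dots> \<le> 2 * 1 * \<bar>(b - a) / 2\<bar>"
    by (intro mult_mono abs_sin_x_le_abs_x) auto
  finally show ?thesis by simp
qed

text \<open>\<open>cheb_quartic \<kappa> w = (2 / \<kappa>) (T\<^sub>4 (1 + \<kappa> w / 2) - 1)\<close> is the Chebyshev polynomial
  \<open>T\<^sub>4\<close> in an affine coordinate, so \<open>cos_chart \<kappa>\<close> conjugates it to \<open>t \<mapsto> 4 t\<close>.\<close>

definition cheb_quartic :: "real \<Rightarrow> complex \<Rightarrow> complex" where
  "cheb_quartic \<kappa> w = 16 * w * (1 + of_real \<kappa> * w / 2) ^ 2 * (1 + of_real \<kappa> * w / 4)"

definition cos_chart :: "real \<Rightarrow> complex \<Rightarrow> complex" where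
  "cos_chart \<kappa> t = 2 / of_real \<kappa> * (cos t - 1)"

definition cheb_indep_polynomial :: "real \<Rightarrow> complex poly" where
  "cheb_indep_polynomial \<kappa> = [:1, 16, 20 * of_real \<kappa>, 8 * of_real \<kappa> ^ 2, of_real \<kappa> ^ 3:]"

lemma poly_cheb_indep_polynomial: "poly (cheb_indep_polynomial \<kappa>) w = 1 + cheb_quartic \<kappa> w"
  by (simp add: cheb_indep_polynomial_def cheb_quartic_def field_simps power2_eq_square power3_eq_cube)

lemma cheb_quartic_cos_chart:
  assumes "\<kappa> \<noteq> 0"
  shows "cheb_quartic \<kappa> (cos_chart \<kappa> t) = cos_chart \<kappa> (4 * t)"
proof -
  have h1: "1 + of_real \<kappa> * cos_chart \<kappa> t / 2 = cos t"
    and h2: "1 + of_real \<kappa> * cos_chart \<kappa> t / 4 = (1 + cos t) / 2"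
    using assms by (simp_all add: cos_chart_def field_simps)
  have "cheb_quartic \<kappa> (cos_chart \<kappa> t) = 16 * cos_chart \<kappa> t * cos t ^ 2 * ((1 + cos t) / 2)"
    unfolding cheb_quartic_def h1 h2 ..
  also have "\<dots> = cos_chart \<kappa> (4 * t)"
    unfolding cos_chart_def cos_quadruple using assms
    by (simp add: field_simps power2_eq_square power4_eq_xxxx)
  finally show ?thesis .
qed

lemma funpow_cheb_quartic_cos_chart:
  "\<kappa> \<noteq> 0 \<Longrightarrow> (cheb_quartic \<kappa> ^^ m) (cos_chart \<kappa> t) = cos_chart \<kappa> (4 ^ m * t)"
  by (induction m) (simp_all add: cheb_quartic_cos_chart mult.assoc)

lemma cos_chart_of_real: "cos_chart \<kappa> (of_real t) = of_real (2 / \<kappa> * (cos t - 1))"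
  by (simp add: cos_chart_def cos_of_real)

text \<open>For \<open>0 < \<kappa> \<le> 4\<close> put \<open>cos \<theta> = 1 - \<kappa> / 2\<close>; the preimages of \<open>-1\<close> under the \<open>m\<close>-th
  iterate are the points \<open>cos_chart \<kappa> ((\<plusminus>\<theta> + 2 \<pi> j) / 4\<^sup>m)\<close>.\<close>

lemma cheb_quartic_preimages_real:
  assumes \<kappa>: "0 < \<kappa>" "\<kappa> \<le> 4" and z: "(cheb_quartic \<kappa> ^^ m) z = -1"
  shows "z \<in> closed_segment (complex_of_real (- 4 / \<kappa>)) 0"
proof -
  define t where "t = Arccos (1 + of_real \<kappa> * z / 2)"
  have zt: "z = cos_chart \<kappa> t" using \<kappa> by (simp add: t_def cos_chart_def field_simps)
  define \<theta> where "\<theta> = arccos (1 - \<kappa> / 2)"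
  have "cos_chart \<kappa> (4 ^ m * t) = -1"
    using z \<kappa> by (simp add: zt funpow_cheb_quartic_cos_chart)
  then have "cos (4 ^ m * t) = of_real (1 - \<kappa> / 2)"
    using \<kappa> by (simp add: cos_chart_def field_simps)
  also have "\<dots> = cos (of_real \<theta>)"
    using \<kappa> by (simp add: \<theta>_def cos_of_real)
  finally obtain x :: real where "4 ^ m * t = of_real x"
    unfolding complex_cos_eq by (metis of_real_add of_real_minus)
  then have "t = of_real (x / 4 ^ m)" by (simp add: field_simps)
  then have "t = of_real (Re t)" by simp
  then have "z = of_real (2 / \<kappa> * (cos (Re t) - 1))" using zt cos_chart_of_real by metis
  moreover have "2 / \<kappa> * (cos (Re t) - 1) \<in> {- 4 / \<kappa>..0}"
    using \<kappa> cos_ge_minus_one[of "Re t"] cos_le_one[of "Re t"] by (auto simp: field_simps)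
  moreover have "closed_segment (complex_of_real (- 4 / \<kappa>)) 0 = of_real ` {- 4 / \<kappa>..0}"
    using closed_segment_neg_real_0[of "4 / \<kappa>"] \<kappa> by simp
  ultimately show ?thesis by blast
qed

lemma cheb_quartic_preimages_dense:
  assumes \<kappa>: "0 < \<kappa>" "\<kappa> \<le> 4" and s: "s \<in> {- 4 / \<kappa>..0}"
  shows "\<exists>r. (cheb_quartic \<kappa> ^^ m) r = -1 \<and> dist (of_real s) r \<le> 4 * pi / (\<kappa> * 4 ^ m)"
proof -
  define \<theta> where "\<theta> = arccos (1 - \<kappa> / 2)"
  define N :: real where "N = 4 ^ m"
  have N: "0 < N" by (simp add: N_def)
  define t where "t = arccos (1 + \<kappa> * s / 2)"
  have "cos t = 1 + \<kappa> * s / 2"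
    unfolding t_def using \<kappa> s by (intro cos_arccos) (auto simp: field_simps mult_nonneg_nonpos)
  then have s_eq: "s = 2 / \<kappa> * (cos t - 1)" using \<kappa> by (simp add: field_simps)
  define j where "j = \<lfloor>(N * t - \<theta>) / (2 * pi)\<rfloor>"
  define u where "u = (\<theta> + 2 * pi * j) / N"
  have "j \<le> (N * t - \<theta>) / (2 * pi)" "(N * t - \<theta>) / (2 * pi) < j + 1"
    unfolding j_def by linarith+
  then have "2 * pi * j \<le> N * t - \<theta>" "N * t - \<theta> < 2 * pi * (j + 1)"
    using pi_gt_zero by (simp_all add: mult.commute pos_le_divide_eq pos_divide_less_eq)
  moreover have "N * u = \<theta> + 2 * pi * j" using N by (simp add: u_def)
  ultimately have "\<bar>N * t - N * u\<bar> \<le> 2 * pi" by (simp add: abs_le_iff algebra_simps)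
  then have tu: "\<bar>t - u\<bar> \<le> 2 * pi / N"
    using N by (simp add: pos_le_divide_eq abs_mult right_diff_distrib[symmetric] mult.commute)
  define r where "r = 2 / \<kappa> * (cos u - 1)"
  have "of_real r = cos_chart \<kappa> (of_real u)" by (simp add: r_def cos_chart_of_real)
  then have "(cheb_quartic \<kappa> ^^ m) (of_real r) = cos_chart \<kappa> (4 ^ m * of_real u)"
    using \<kappa> by (simp only: funpow_cheb_quartic_cos_chart)
  also have "(4 :: complex) ^ m * of_real u = of_real (\<theta> + 2 * pi * j)"
    using N by (simp add: u_def N_def)
  also have "cos_chart \<kappa> (of_real (\<theta> + 2 * pi * j)) = of_real (2 / \<kappa> * (cos \<theta> - 1))"
    unfolding cos_chart_of_real by (simp add: cos_add)
  also have "cos \<theta> = 1 - \<kappa> / 2" unfolding \<theta>_def using \<kappa> by (intro cos_arccos) auto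
  finally have root: "(cheb_quartic \<kappa> ^^ m) (of_real r) = -1" using \<kappa> by simp
  have sr: "s - r = 2 / \<kappa> * (cos t - cos u)" by (simp add: s_eq r_def right_diff_distrib)
  have "dist (complex_of_real s) (of_real r) = \<bar>s - r\<bar>" by (simp add: dist_norm flip: of_real_diff)
  also have "\<dots> = 2 / \<kappa> * \<bar>cos t - cos u\<bar>" unfolding sr abs_mult using \<kappa> by simp
  also have "\<dots> \<le> 2 / \<kappa> * (2 * pi / N)"
    using \<kappa> cos_lipschitz[of t u] tu by (intro mult_left_mono) auto
  also have "\<dots> = 4 * pi / (\<kappa> * 4 ^ m)" by (simp add: N_def)
  finally show ?thesis using root by blast
qed

lemma indep_attractor_is_segment:
  assumes fin: "finite V" and irrefl: "\<And>x. \<not> E x x" and \<kappa>: "0 < \<kappa>" "\<kappa> \<le> 4"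
    and cheb: "indep_polynomial V E = cheb_indep_polynomial \<kappa>"
  shows "indep_attractor_is V E (closed_segment (complex_of_real (- 4 / \<kappa>)) 0)"
proof -
  let ?S = "closed_segment (complex_of_real (- 4 / \<kappa>)) 0"
  define R where "R m = indep_roots (lex_pow_V V m) (lex_adj E)" for m
  define B where "B m = 4 * pi / (\<kappa> * 4 ^ m)" for m :: nat
  have R: "R m = {z. (cheb_quartic \<kappa> ^^ m) z = -1}" for m
    unfolding R_def indep_roots_lex_pow[OF fin irrefl] cheb poly_cheb_indep_polynomial by simp
  have seg: "?S = of_real ` {- 4 / \<kappa>..0}"
    using closed_segment_neg_real_0[of "4 / \<kappa>"] \<kappa> by simp
  have close: "infdist s (R m) \<le> B m" if "s \<in> ?S" for s m
  proof -
    obtain x where "x \<in> {- 4 / \<kappa>..0}" "s = of_real x" using \<open>s \<in> ?S\<close> seg by blast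
    then show ?thesis
      using cheb_quartic_preimages_dense[OF \<kappa>, of x m] unfolding R B_def by (auto intro: infdist_le2)
  qed
  have R_ne: "R m \<noteq> {}" for m
    using cheb_quartic_preimages_dense[OF \<kappa>, of 0 m] \<kappa> unfolding R by auto
  have "R m \<subseteq> ?S" for m using cheb_quartic_preimages_real[OF \<kappa>] unfolding R by blast
  note hd = hausdorff_dist_subset_le[OF this R_ne _ close]
  have "(\<lambda>m. 4 * pi / \<kappa> * inverse ((4 :: real) ^ m)) \<longlonglongrightarrow> 4 * pi / \<kappa> * 0"
    by (intro tendsto_intros LIMSEQ_inverse_realpow_zero) simp
  moreover have "(\<lambda>m. 4 * pi / \<kappa> * inverse ((4 :: real) ^ m)) = B"
    by (simp add: B_def fun_eq_iff field_simps)
  ultimately have "B \<longlonglongrightarrow> 0" by simp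
  have "(\<lambda>m. hausdorff_dist (R m) ?S) \<longlonglongrightarrow> 0"
    by (rule tendsto_sandwich[of "\<lambda>_. 0" _ _ B]) (use hd \<open>B \<longlonglongrightarrow> 0\<close> in auto)
  then show ?thesis
    unfolding indep_attractor_is_def R_def[symmetric] using R_ne by (auto intro: compact_segment)
qed

section \<open>Cographs\<close>

datatype cograph = CVertex | CUnion cograph cograph | CJoin cograph cograph

fun cograph_verts :: "cograph \<Rightarrow> nat set" where
  "cograph_verts CVertex = {0}"
| "cograph_verts (CUnion a b) = (\<lambda>x. 2 * x) ` cograph_verts a \<union> (\<lambda>x. 2 * x + 1) ` cograph_verts b"
| "cograph_verts (CJoin a b) = (\<lambda>x. 2 * x) ` cograph_verts a \<union> (\<lambda>x. 2 * x + 1) ` cograph_verts b"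

fun cograph_adj :: "cograph \<Rightarrow> nat \<Rightarrow> nat \<Rightarrow> bool" where
  "cograph_adj CVertex x y = False"
| "cograph_adj (CUnion a b) x y \<longleftrightarrow>
     even x \<and> even y \<and> cograph_adj a (x div 2) (y div 2) \<or>
     odd x \<and> odd y \<and> cograph_adj b (x div 2) (y div 2)"
| "cograph_adj (CJoin a b) x y \<longleftrightarrow>
     even x \<and> even y \<and> cograph_adj a (x div 2) (y div 2) \<or>
     odd x \<and> odd y \<and> cograph_adj b (x div 2) (y div 2) \<or>
     x \<in> cograph_verts (CJoin a b) \<and> y \<in> cograph_verts (CJoin a b) \<and> even x \<noteq> even y"

fun cograph_polynomial :: "cograph \<Rightarrow> complex poly" where
  "cograph_polynomial CVertex = [:1, 1:]"
| "cograph_polynomial (CUnion a b) = cograph_polynomial a * cograph_polynomial b"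
| "cograph_polynomial (CJoin a b) = cograph_polynomial a + cograph_polynomial b - 1"

lemma simple_graph_cograph: "simple_graph (cograph_verts t) (cograph_adj t)"
proof -
  have "finite (cograph_verts t)" by (induction t) auto
  moreover have "\<not> cograph_adj t x x" for x by (induction t arbitrary: x) auto
  moreover have "cograph_adj t y x" if "cograph_adj t x y" for x y
    using that by (induction t arbitrary: x y) auto
  moreover have "x \<in> cograph_verts t \<and> y \<in> cograph_verts t" if "cograph_adj t x y" for x y
    using that by (induction t arbitrary: x y) (auto simp: image_iff elim!: evenE oddE)
  ultimately show ?thesis by (auto simp: simple_graph_def)
qed

lemma indep_polynomial_cograph:
  "indep_polynomial (cograph_verts t) (cograph_adj t) = cograph_polynomial t"
proof (induction t)
  case CVertex
  then show ?case by (simp add: indep_polynomial_singleton)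
next
  case (CUnion a b)
  let ?A = "(\<lambda>x. 2 * x) ` cograph_verts a" and ?B = "(\<lambda>x. 2 * x + 1) ` cograph_verts b"
  have "cograph_verts (CUnion a b) - ?A = ?B" by auto presburger
  moreover have "indep_polynomial ?A (cograph_adj (CUnion a b)) = cograph_polynomial a"
    "indep_polynomial ?B (cograph_adj (CUnion a b)) = cograph_polynomial b"
    using CUnion.IH by (subst indep_polynomial_image; simp add: inj_on_def)+
  moreover have "finite (cograph_verts (CUnion a b))"
    using simple_graph_cograph simple_graph_def by blast
  ultimately show ?case
    by (subst indep_polynomial_no_edges_between[where A = ?A]) auto
next
  case (CJoin a b)
  let ?A = "(\<lambda>x. 2 * x) ` cograph_verts a" and ?B = "(\<lambda>x. 2 * x + 1) ` cograph_verts b"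
  have B: "cograph_verts (CJoin a b) - ?A = ?B" by auto presburger
  have "indep_polynomial (cograph_verts (CJoin a b)) (cograph_adj (CJoin a b)) =
      indep_polynomial ?A (cograph_adj (CJoin a b)) + indep_polynomial ?B (cograph_adj (CJoin a b)) - 1"
    unfolding B[symmetric]
  proof (rule indep_polynomial_complete_between)
    show "finite (cograph_verts (CJoin a b))"
      using simple_graph_cograph simple_graph_def by blast
    fix x y assume "x \<in> ?A" "y \<in> cograph_verts (CJoin a b) - ?A"
    then show "cograph_adj (CJoin a b) x y" unfolding B by auto
  qed auto
  moreover have "indep_polynomial ?A (cograph_adj (CJoin a b)) = cograph_polynomial a"
    "indep_polynomial ?B (cograph_adj (CJoin a b)) = cograph_polynomial b"
    using CJoin.IH by (subst indep_polynomial_image; simp add: inj_on_def)+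
  ultimately show ?case by (simp only: cograph_polynomial.simps)
qed

fun join_clique :: "nat \<Rightarrow> cograph \<Rightarrow> cograph" where
  "join_clique 0 t = t"
| "join_clique (Suc n) t = CJoin CVertex (join_clique n t)"

lemma cograph_polynomial_join_clique:
  "cograph_polynomial (join_clique n t) = cograph_polynomial t + [:0, of_nat n:]"
  by (induction n) (auto simp: one_pCons)

definition cograph_example :: "nat \<Rightarrow> cograph" where
  "cograph_example k =
    (if k = 1 then
       join_clique 2 (CUnion CVertex
         (join_clique 6 (CUnion CVertex (join_clique 4 (CUnion CVertex CVertex)))))
     else if k = 2 then
       join_clique 1 (CUnion (join_clique 1 CVertex)
         (join_clique 2 (CUnion CVertex (join_clique 5 (CUnion CVertex (join_clique 3 CVertex))))))
     else if k = 3 then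
       CUnion CVertex (CUnion (join_clique 2 CVertex)
         (join_clique 2 (CUnion CVertex (join_clique 8 CVertex))))
     else
       let H = join_clique 2 (CUnion (join_clique 1 CVertex) (join_clique 3 CVertex)) in CUnion H H)"

lemma cograph_polynomial_example:
  assumes "k \<in> {1, 2, 3, 4}"
  shows "cograph_polynomial (cograph_example k) = cheb_indep_polynomial (real k)"
  using assms
  by (auto simp: cograph_example_def cograph_polynomial_join_clique cheb_indep_polynomial_def
      one_pCons Let_def)


lemma cograph_segment_attractor:
  assumes "k \<in> {1, 2, 3, 4}"
  shows "\<exists>(V :: nat set) E. simple_graph V E \<and> indep_number V E = 4 \<and>
           indep_attractor_is V E (closed_segment (complex_of_real (- 4 / real k)) 0)"
proof (intro exI conjI)
  let ?G = "cograph_example k"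
  have poly: "indep_polynomial (cograph_verts ?G) (cograph_adj ?G) = cheb_indep_polynomial (real k)"
    using indep_polynomial_cograph cograph_polynomial_example[OF assms] by simp
  have sg: "simple_graph (cograph_verts ?G) (cograph_adj ?G)" by (rule simple_graph_cograph)
  then show "simple_graph (cograph_verts ?G) (cograph_adj ?G)" .
  have fin: "finite (cograph_verts ?G)" using sg by (simp add: simple_graph_def)
  show "indep_number (cograph_verts ?G) (cograph_adj ?G) = 4"
    using degree_indep_polynomial[OF fin, of "cograph_adj ?G"] assms
    by (auto simp: poly cheb_indep_polynomial_def)
  show "indep_attractor_is (cograph_verts ?G) (cograph_adj ?G)
      (closed_segment (complex_of_real (- 4 / real k)) 0)"
    using sg assms by (intro indep_attractor_is_segment[OF fin _ _ _ poly]) (auto simp: simple_graph_def)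
qed

section \<open>Invariance of a limit of iterated preimages\<close>

lemma infdist_less_imp_dist_less:
  assumes "A \<noteq> {}" "infdist x A < e"
  obtains a where "a \<in> A" "dist x a < e"
proof -
  have "(INF a\<in>A. dist x a) < e" using assms by (simp add: infdist_notempty)
  then show ?thesis
    using that assms(1) by (subst (asm) cINF_less_iff) (auto intro: bdd_belowI[of _ 0])
qed

lemma hausdorff_dist_less_imp_close:
  fixes R S :: "'a::metric_space set"
  assumes R: "finite R" "R \<noteq> {}" and S: "bounded S" "S \<noteq> {}" and less: "hausdorff_dist R S < e"
  shows "\<forall>r\<in>R. \<exists>s\<in>S. dist r s < e" "\<forall>s\<in>S. \<exists>r\<in>R. dist s r < e"
proof -
  have "infdist r S < e" if "r \<in> R" for r
  proof -
    have "infdist r S \<le> (SUP r\<in>R. infdist r S)"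
      using that R by (intro cSUP_upper) auto
    then show ?thesis using less unfolding hausdorff_dist_def by simp
  qed
  then show "\<forall>r\<in>R. \<exists>s\<in>S. dist r s < e" using S(2) by (metis infdist_less_imp_dist_less)
  obtain r0 where r0: "r0 \<in> R" using R(2) by auto
  obtain B where B: "\<And>s. s \<in> S \<Longrightarrow> dist s r0 \<le> B"
    using bounded_any_center[of S r0] S(1) by (auto simp: dist_commute)
  have "infdist s R < e" if "s \<in> S" for s
  proof -
    have "bdd_above ((\<lambda>s. infdist s R) ` S)"
      using B infdist_le[OF r0] by (intro bdd_aboveI2) (rule order_trans)
    then have "infdist s R \<le> (SUP s\<in>S. infdist s R)"
      using that by (intro cSUP_upper) auto
    then show ?thesis using less unfolding hausdorff_dist_def by simp
  qed
  then show "\<forall>s\<in>S. \<exists>r\<in>R. dist s r < e" using R(2) by (metis infdist_less_imp_dist_less)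
qed

definition hausdorff_converges :: "(nat \<Rightarrow> 'a::metric_space set) \<Rightarrow> 'a set \<Rightarrow> bool" where
  "hausdorff_converges R S \<longleftrightarrow> (\<forall>e>0. \<forall>\<^sub>F m in sequentially.
     (\<forall>r\<in>R m. \<exists>s\<in>S. dist r s < e) \<and> (\<forall>s\<in>S. \<exists>r\<in>R m. dist s r < e))"

lemma hausdorff_convergesI:
  fixes R :: "nat \<Rightarrow> 'a::metric_space set"
  assumes "\<And>m. finite (R m)" "\<forall>\<^sub>F m in sequentially. R m \<noteq> {}" "bounded S" "S \<noteq> {}"
    and lim: "(\<lambda>m. hausdorff_dist (R m) S) \<longlonglongrightarrow> 0"
  shows "hausdorff_converges R S"
  unfolding hausdorff_converges_def
proof (intro allI impI)
  fix e :: real assume "0 < e"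
  have "\<forall>\<^sub>F m in sequentially. R m \<noteq> {} \<and> hausdorff_dist (R m) S < e"
    using assms(2) order_tendstoD(2)[OF lim \<open>0 < e\<close>] by (rule eventually_conj)
  then show "\<forall>\<^sub>F m in sequentially. (\<forall>r\<in>R m. \<exists>s\<in>S. dist r s < e) \<and> (\<forall>s\<in>S. \<exists>r\<in>R m. dist s r < e)"
    by (rule eventually_mono) (use hausdorff_dist_less_imp_close[OF assms(1) _ assms(3,4)] in blast)
qed

lemma poly_preimage_near:
  fixes p :: "complex poly"
  assumes "0 < degree p"
  shows "\<exists>\<zeta>. poly p \<zeta> = w \<and> norm (lead_coeff p) * norm (z - \<zeta>) ^ degree p \<le> norm (poly p z - w)"
proof -
  define q where "q = p + [:- w:]"
  have dq: "degree q = degree p" using assms by (simp add: q_def degree_add_eq_left)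
  then have lq: "coeff q (degree p) = lead_coeff p"
    using assms by (simp add: q_def coeff_pCons split: nat.split)
  obtain root where q: "smult (lead_coeff q) (\<Prod>i<degree q. [:- root i, 1:]) = q"
    using complex_poly_decompose' by blast
  let ?d = "\<lambda>i. norm (z - root i)"
  obtain i0 where i0: "i0 < degree p" "\<And>i. i < degree p \<Longrightarrow> ?d i0 \<le> ?d i"
  proof -
    have "Min (?d ` {..<degree p}) \<in> ?d ` {..<degree p}" using assms by (intro Min_in) auto
    then obtain i0 where "i0 < degree p" "?d i0 = Min (?d ` {..<degree p})" by auto
    then show ?thesis using that[of i0] by simp
  qed
  have "poly q (root i0) = 0"
    using i0(1) by (subst q[symmetric]) (auto simp: dq poly_prod prod_zero_iff)
  moreover have "norm (poly q z) = norm (lead_coeff p) * (\<Prod>i<degree p. ?d i)"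
    by (subst q[symmetric]) (simp add: dq lq poly_prod norm_mult prod_norm)
  moreover have "?d i0 ^ degree p \<le> (\<Prod>i<degree p. ?d i)"
    using prod_mono[of "{..<degree p}" "\<lambda>_. ?d i0" ?d] i0(2) by simp
  ultimately show ?thesis
    by (intro exI[of _ "root i0"]) (auto simp: q_def intro: mult_left_mono)
qed

lemma hausdorff_limit_of_preimages_forward_invariant:
  fixes p :: "complex poly"
  assumes R: "\<And>m. R m = {z. (poly p ^^ m) z = c}" and "closed S" and conv: "hausdorff_converges R S"
    and s: "s \<in> S"
  shows "poly p s \<in> S"
proof -
  have close: "\<forall>\<^sub>F m in sequentially. (\<forall>r\<in>R m. \<exists>s\<in>S. dist r s < e) \<and> (\<forall>s\<in>S. \<exists>r\<in>R m. dist s r < e)"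
    if "0 < e" for e
    using conv that by (simp add: hausdorff_converges_def)
  have "\<exists>x\<in>S. dist x (poly p s) < e" if e: "0 < e" for e
  proof -
    obtain \<delta> where \<delta>: "0 < \<delta>" "\<And>w. dist w s < \<delta> \<Longrightarrow> dist (poly p w) (poly p s) < e / 2"
      using poly_isCont[where p = p and x = s] e unfolding continuous_at_eps_delta by (meson half_gt_zero)
    have "\<forall>\<^sub>F m in sequentially. \<forall>r\<in>R m. \<exists>x\<in>S. dist r x < e / 2"
      using close[of "e / 2"] e by (auto elim: eventually_mono)
    moreover have "\<forall>\<^sub>F m in sequentially. \<forall>s\<in>S. \<exists>r\<in>R m. dist s r < \<delta>"
      using close[OF \<delta>(1)] by (auto elim: eventually_mono)
    then have "\<forall>\<^sub>F m in sequentially. \<forall>s\<in>S. \<exists>r\<in>R (Suc m). dist s r < \<delta>"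
      by (subst eventually_sequentially_Suc)
    ultimately obtain m where m: "\<forall>r\<in>R m. \<exists>x\<in>S. dist r x < e / 2"
      "\<forall>s\<in>S. \<exists>r\<in>R (Suc m). dist s r < \<delta>"
      using eventually_happens'[OF sequentially_bot eventually_conj] by blast
    obtain w where w: "w \<in> R (Suc m)" "dist s w < \<delta>" using m(2) s by blast
    have "poly p w \<in> R m" using w(1) by (simp add: R funpow_swap1)
    then obtain x where "x \<in> S" "dist (poly p w) x < e / 2" using m(1) by blast
    moreover have "dist (poly p w) (poly p s) < e / 2" using \<delta>(2) w(2) by (metis dist_commute)
    ultimately show ?thesis by (metis dist_commute dist_triangle_half_l)
  qed
  then show ?thesis using \<open>closed S\<close> closure_approachable closure_closed by metis
qed

lemma hausdorff_limit_of_preimages_backward_invariant: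
  fixes p :: "complex poly"
  assumes R: "\<And>m. R m = {z. (poly p ^^ m) z = c}" and "closed S" and conv: "hausdorff_converges R S"
    and deg: "0 < degree p" and z: "poly p z \<in> S"
  shows "z \<in> S"
proof -
  have close: "\<forall>\<^sub>F m in sequentially. (\<forall>r\<in>R m. \<exists>s\<in>S. dist r s < e) \<and> (\<forall>s\<in>S. \<exists>r\<in>R m. dist s r < e)"
    if "0 < e" for e
    using conv that by (simp add: hausdorff_converges_def)
  have "\<exists>x\<in>S. dist x z < e" if e: "0 < e" for e
  proof -
    define \<delta> where "\<delta> = norm (lead_coeff p) * (e / 2) ^ degree p"
    have "p \<noteq> 0" using deg by auto
    then have \<delta>: "0 < \<delta>" using e by (simp add: \<delta>_def)
    have "\<forall>\<^sub>F m in sequentially. \<forall>r\<in>R m. \<exists>x\<in>S. dist r x < e / 2"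
      using close[of "e / 2"] e by (auto elim: eventually_mono)
    then have "\<forall>\<^sub>F m in sequentially. \<forall>r\<in>R (Suc m). \<exists>x\<in>S. dist r x < e / 2"
      by (subst eventually_sequentially_Suc)
    moreover have "\<forall>\<^sub>F m in sequentially. \<forall>s\<in>S. \<exists>r\<in>R m. dist s r < \<delta>"
      using close[OF \<delta>] by (auto elim: eventually_mono)
    ultimately obtain m where m: "\<forall>r\<in>R (Suc m). \<exists>x\<in>S. dist r x < e / 2"
      "\<forall>s\<in>S. \<exists>r\<in>R m. dist s r < \<delta>"
      using eventually_happens'[OF sequentially_bot eventually_conj] by blast
    obtain w where w: "w \<in> R m" "dist (poly p z) w < \<delta>" using m(2) z by blast
    obtain \<zeta> where \<zeta>: "poly p \<zeta> = w"
      "norm (lead_coeff p) * norm (z - \<zeta>) ^ degree p \<le> norm (poly p z - w)"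
      using poly_preimage_near[OF deg] by blast
    have "norm (lead_coeff p) * norm (z - \<zeta>) ^ degree p < norm (lead_coeff p) * (e / 2) ^ degree p"
      using \<zeta>(2) w(2) by (simp add: \<delta>_def dist_norm)
    then have "norm (z - \<zeta>) ^ degree p < (e / 2) ^ degree p" using \<open>p \<noteq> 0\<close> by simp
    then have "norm (z - \<zeta>) < e / 2" by (rule power_less_imp_less_base) (use e in auto)
    moreover have "\<zeta> \<in> R (Suc m)" using w(1) \<zeta>(1) by (simp add: R funpow_swap1)
    then obtain x where "x \<in> S" "dist \<zeta> x < e / 2" using m(1) by blast
    ultimately show ?thesis by (metis dist_commute dist_norm dist_triangle_half_l)
  qed
  then show ?thesis using \<open>closed S\<close> closure_approachable closure_closed by metis
qed

section \<open>Quartics mapping a segment into itself\<close>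

lemma complex_poly_sorted_real_roots:
  fixes q :: "complex poly"
  assumes "q \<noteq> 0" and real: "\<And>z. poly q z = 0 \<Longrightarrow> Im z = 0"
  obtains rs :: "real list"
  where "sorted rs" "length rs = degree q" "\<And>r. r \<in> set rs \<Longrightarrow> poly q (of_real r) = 0"
    "q = smult (lead_coeff q) (\<Prod>r\<leftarrow>rs. [:- of_real r, 1:])"
proof
  define M where "M = image_mset Re (proots q)"
  have "proots q = image_mset (of_real \<circ> Re) (proots q)"
    using real assms(1) by (subst multiset.map_ident_strong) (auto simp: complex_eq_iff)
  then have roots: "proots q = image_mset of_real M" by (simp add: M_def multiset.map_comp)
  show "sorted (sorted_list_of_multiset M)" by simp
  show "length (sorted_list_of_multiset M) = degree q"
    by (simp add: M_def size_proots_complex flip: size_mset)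
  show "poly q (of_real r) = 0" if "r \<in> set (sorted_list_of_multiset M)" for r
  proof -
    have "of_real r \<in># proots q" using that unfolding roots by simp
    then show ?thesis using assms(1) by simp
  qed
  have "q = smult (lead_coeff q) (\<Prod>x\<in>#proots q. [:- x, 1:])"
    by (rule complex_poly_decompose_multiset[symmetric])
  also have "(\<Prod>x\<in>#proots q. [:- x, 1:]) = (\<Prod>r\<in>#mset (sorted_list_of_multiset M). [:- of_real r, 1:])"
    by (simp add: roots multiset.map_comp o_def)
  also have "\<dots> = (\<Prod>r\<leftarrow>sorted_list_of_multiset M. [:- of_real r, 1:])"
    by (metis mset_map prod_mset_prod_list)
  finally show "q = smult (lead_coeff q) (\<Prod>r\<leftarrow>sorted_list_of_multiset M. [:- of_real r, 1:])" .
qed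

lemma quartic_nonpos_on_interval:
  fixes a L r1 r2 r3 r4 :: real
  assumes "0 < a" and r: "- L \<le> r1" "r1 \<le> r2" "r2 \<le> r3" "r3 \<le> r4" "r4 \<le> 0"
    and nonpos: "\<And>x. - L \<le> x \<Longrightarrow> x \<le> 0 \<Longrightarrow> a * (((x - r1) * (x - r2)) * ((x - r3) * (x - r4))) \<le> 0"
  shows "r1 = - L" "r2 = r3" "r4 = 0"
proof -
  have contra: False
    if "- L \<le> x" "x \<le> 0" "0 < (x - r1) * (x - r2)" "0 < (x - r3) * (x - r4)" for x
    using nonpos[OF that(1,2)] mult_pos_pos[OF \<open>0 < a\<close> mult_pos_pos[OF that(3,4)]] by linarith
  show "r1 = - L"
  proof (rule ccontr)
    assume "r1 \<noteq> - L"
    with r have "- L < r1" by simp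
    let ?x = "(r1 - L) / 2"
    have "0 < (?x - r1) * (?x - r2)"
      using r \<open>- L < r1\<close> by (intro mult_neg_neg) (simp_all add: field_simps)
    moreover have "0 < (?x - r3) * (?x - r4)"
      using r \<open>- L < r1\<close> by (intro mult_neg_neg) (simp_all add: field_simps)
    ultimately show False using r \<open>- L < r1\<close> by (intro contra[of ?x]) auto
  qed
  show "r2 = r3"
  proof (rule ccontr)
    assume "r2 \<noteq> r3"
    with r have "r2 < r3" by simp
    let ?x = "(r2 + r3) / 2"
    have "0 < (?x - r1) * (?x - r2)"
      using r \<open>r2 < r3\<close> by (intro mult_pos_pos) (simp_all add: field_simps)
    moreover have "0 < (?x - r3) * (?x - r4)"
      using r \<open>r2 < r3\<close> by (intro mult_neg_neg) (simp_all add: field_simps)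
    ultimately show False using r by (intro contra[of ?x]) auto
  qed
  show "r4 = 0"
  proof (rule ccontr)
    assume "r4 \<noteq> 0"
    with r have "r4 < 0" by simp
    have "0 < (0 - r1) * (0 - r2)"
      using r \<open>r4 < 0\<close> by (intro mult_pos_pos) (simp_all add: field_simps)
    moreover have "0 < (0 - r3) * (0 - r4)"
      using r \<open>r4 < 0\<close> by (intro mult_pos_pos) (simp_all add: field_simps)
    ultimately
    show False using r by (intro contra[of 0]) auto
  qed
qed

lemma quartic_nonneg_on_interval:
  fixes a L s1 s2 s3 s4 :: real
  assumes "0 < a" and s: "- L \<le> s1" "s1 \<le> s2" "s2 \<le> s3" "s3 \<le> s4" "s4 \<le> 0"
    and nonneg: "\<And>x. - L \<le> x \<Longrightarrow> x \<le> 0 \<Longrightarrow> 0 \<le> a * (((x - s1) * (x - s2)) * ((x - s3) * (x - s4)))"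
  shows "s1 = s2" "s3 = s4"
proof -
  have contra: False
    if "- L \<le> x" "x \<le> 0" "(x - s1) * (x - s2) * ((x - s3) * (x - s4)) < 0" for x
    using nonneg[OF that(1,2)] mult_pos_neg[OF \<open>0 < a\<close> that(3)] by linarith
  show "s1 = s2"
  proof (rule ccontr)
    assume "s1 \<noteq> s2"
    with s have "s1 < s2" by simp
    let ?x = "(s1 + s2) / 2"
    have "(?x - s1) * (?x - s2) < 0"
      using s \<open>s1 < s2\<close> by (intro mult_pos_neg) (simp_all add: field_simps)
    moreover have "0 < (?x - s3) * (?x - s4)"
      using s \<open>s1 < s2\<close> by (intro mult_neg_neg) (simp_all add: field_simps)
    ultimately have "(?x - s1) * (?x - s2) * ((?x - s3) * (?x - s4)) < 0" by (rule mult_neg_pos)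
    then show False using s by (intro contra[of ?x]) (simp_all add: field_simps)
  qed
  show "s3 = s4"
  proof (rule ccontr)
    assume "s3 \<noteq> s4"
    with s have "s3 < s4" by simp
    let ?x = "(s3 + s4) / 2"
    have "0 < (?x - s1) * (?x - s2)"
      using s \<open>s3 < s4\<close> by (intro mult_pos_pos) (simp_all add: field_simps)
    moreover have "(?x - s3) * (?x - s4) < 0"
      using s \<open>s3 < s4\<close> by (intro mult_pos_neg) (simp_all add: field_simps)
    ultimately have "(?x - s1) * (?x - s2) * ((?x - s3) * (?x - s4)) < 0" by (rule mult_pos_neg)
    then show False using s by (intro contra[of ?x]) (simp_all add: field_simps)
  qed
qed

lemma quartic_real_root_factorization:
  fixes q :: "complex poly" and L :: real
  assumes "degree q = 4" "0 \<le> L"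
    and roots: "\<And>z. poly q z = 0 \<Longrightarrow> z \<in> closed_segment (complex_of_real (- L)) 0"
  obtains r1 r2 r3 r4 :: real where "- L \<le> r1" "r1 \<le> r2" "r2 \<le> r3" "r3 \<le> r4" "r4 \<le> 0"
    "q = smult (lead_coeff q)
          ([:- of_real r1, 1:] * [:- of_real r2, 1:] * [:- of_real r3, 1:] * [:- of_real r4, 1:])"
proof -
  have "q \<noteq> 0" using assms(1) by auto
  moreover have "Im z = 0" if "poly q z = 0" for z
    using roots[OF that] mem_closed_segment_neg_real_0[OF assms(2)] by blast
  ultimately obtain rs where rs: "sorted rs" "length rs = 4" "\<And>r. r \<in> set rs \<Longrightarrow> poly q (of_real r) = 0"
    "q = smult (lead_coeff q) (\<Prod>r\<leftarrow>rs. [:- of_real r, 1:])"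
    using complex_poly_sorted_real_roots assms(1) by metis
  then obtain r1 r2 r3 r4 where rs4: "rs = [r1, r2, r3, r4]"
    by (auto simp: numeral_eq_Suc length_Suc_conv)
  have "- L \<le> r \<and> r \<le> 0" if "r \<in> set rs" for r
    using roots[OF rs(3)[OF that]] mem_closed_segment_neg_real_0[OF assms(2)] by simp
  then have bounds: "- L \<le> r1" "r4 \<le> 0" by (simp_all add: rs4)
  have sorted: "r1 \<le> r2" "r2 \<le> r3" "r3 \<le> r4" using rs(1) by (simp_all add: rs4)
  have "q = smult (lead_coeff q)
      ([:- of_real r1, 1:] * [:- of_real r2, 1:] * [:- of_real r3, 1:] * [:- of_real r4, 1:])"
    using rs(4) unfolding rs4 by (simp only: list.map prod_list.Cons prod_list.Nil mult_1_right mult.assoc)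
  then show ?thesis by (rule that[OF bounds(1) sorted bounds(2)])
qed

lemma quartic_double_roots_coeffs:
  fixes a L c s1 s3 :: complex
  assumes a: "a \<noteq> 0" and L: "L \<noteq> 0"
    and eq: "smult a ([:L, 1:] * [:- c, 1:] * [:- c, 1:] * [:0, 1:]) + [:L:] =
             smult a ([:- s1, 1:] * [:- s1, 1:] * [:- s3, 1:] * [:- s3, 1:])"
  shows "c = - L / 2" "a = 64 / L ^ 3"
proof -
  have e: "coeff (smult a ([:L, 1:] * [:- c, 1:] * [:- c, 1:] * [:0, 1:]) + [:L:]) i =
      coeff (smult a ([:- s1, 1:] * [:- s1, 1:] * [:- s3, 1:] * [:- s3, 1:])) i" for i
    by (simp only: eq)
  have e0: "L = a * (s1 * s1 * s3 * s3)" using e[of 0] by (simp add: algebra_simps)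
  have "a * (L * c * c) = a * (- (2 * s1 * s3 * (s1 + s3)))"
    using e[of 1] by (simp add: algebra_simps)
  then have e1: "L * c * c = - (2 * s1 * s3 * (s1 + s3))" using a mult_left_cancel by blast
  have "a * (c * c - 2 * c * L) = a * ((s1 + s3) * (s1 + s3) + 2 * s1 * s3)"
    using e[of 2] by (simp add: algebra_simps numeral_eq_Suc)
  then have e2: "c * c - 2 * c * L = (s1 + s3) * (s1 + s3) + 2 * s1 * s3" using a mult_left_cancel by blast
  have "a * (L - 2 * c) = a * (- 2 * (s1 + s3))"
    using e[of 3] by (simp add: algebra_simps numeral_eq_Suc)
  then have e3: "L - 2 * c = - 2 * (s1 + s3)" using a mult_left_cancel by blast
  have "L * L * (2 * c + L) = 0" using e1 e2 e3 by algebra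
  then have "2 * c + L = 0" using L by simp
  then show c: "c = - L / 2" by (simp add: field_simps add_eq_0_iff)
  then have s13: "s1 * s3 = L * L / 8" using e2 e3 by algebra
  have "L = a * ((s1 * s3) * (s1 * s3))" using e0 by algebra
  then have "64 * L = a * (L * L * L * L)" unfolding s13 by (simp add: field_simps)
  then have "L * (a * L ^ 3 - 64) = 0" by algebra
  then show "a = 64 / L ^ 3" using L by (simp add: field_simps)
qed

text \<open>Backward invariance puts all roots of \<open>p\<close> and of \<open>p + L\<close> into \<open>[-L, 0]\<close>; forward
  invariance gives \<open>-L \<le> p \<le> 0\<close> there. These sign conditions force
  \<open>p = a w (w + L) (w - c)\<^sup>2\<close> and \<open>p + L = a (w - s)\<^sup>2 (w - s')\<^sup>2\<close>, and comparing
  coefficients gives \<open>c = -L/2\<close>, \<open>a = 64 / L\<^sup>3\<close>.\<close>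

lemma quartic_segment_self_map:
  fixes p :: "complex poly" and a L :: real
  defines "S \<equiv> closed_segment (complex_of_real (- L)) 0"
  assumes deg: "degree p = 4" and lc: "lead_coeff p = of_real a" "0 < a" and L: "0 < L"
    and forward: "\<And>x. x \<in> S \<Longrightarrow> poly p x \<in> S"
    and backward: "\<And>z. poly p z \<in> S \<Longrightarrow> z \<in> S"
  shows "p = smult (of_real (64 / L ^ 3))
           ([:of_real L, 1:] * [:of_real (L / 2), 1:] * [:of_real (L / 2), 1:] * [:0, 1:])"
proof -
  have memS: "z \<in> S \<longleftrightarrow> Im z = 0 \<and> - L \<le> Re z \<and> Re z \<le> 0" for z
    unfolding S_def by (rule mem_closed_segment_neg_real_0) (use L in linarith)
  obtain r1 r2 r3 r4 where r: "- L \<le> r1" "r1 \<le> r2" "r2 \<le> r3" "r3 \<le> r4" "r4 \<le> 0"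
    and pf: "p = smult (of_real a)
              ([:- of_real r1, 1:] * [:- of_real r2, 1:] * [:- of_real r3, 1:] * [:- of_real r4, 1:])"
  proof (rule quartic_real_root_factorization[OF deg, of L, unfolded lc(1)])
    fix z assume "poly p z = 0"
    then have "poly p z \<in> S" using L by (simp add: memS)
    then show "z \<in> closed_segment (complex_of_real (- L)) 0" using backward S_def by blast
  qed (use L in auto)
  define q where "q = p + [:of_real L:]"
  have dq: "degree q = 4" using deg by (simp add: q_def degree_add_eq_left)
  have lq: "lead_coeff q = of_real a" unfolding dq using deg lc(1) by (simp add: q_def numeral_eq_Suc)
  obtain s1 s2 s3 s4 where s: "- L \<le> s1" "s1 \<le> s2" "s2 \<le> s3" "s3 \<le> s4" "s4 \<le> 0"
    and qf: "q = smult (of_real a)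
              ([:- of_real s1, 1:] * [:- of_real s2, 1:] * [:- of_real s3, 1:] * [:- of_real s4, 1:])"
  proof (rule quartic_real_root_factorization[OF dq, of L, unfolded lq])
    fix z assume "poly q z = 0"
    then have "poly p z = - of_real L" by (simp add: q_def add_eq_0_iff)
    then have "poly p z \<in> S" using L by (simp add: memS)
    then show "z \<in> closed_segment (complex_of_real (- L)) 0" using backward S_def by blast
  qed (use L in auto)
  define P where "P x = a * (((x - r1) * (x - r2)) * ((x - r3) * (x - r4)))" for x
  define Q where "Q x = a * (((x - s1) * (x - s2)) * ((x - s3) * (x - s4)))" for x
  have pP: "poly p (of_real x) = of_real (P x)" for x
    by (subst pf) (simp add: P_def algebra_simps)
  have QP: "Q x = P x + L" for x
  proof -
    have "of_real (Q x) = poly q (of_real x)" by (subst qf) (simp add: Q_def algebra_simps)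
    also have "\<dots> = of_real (P x + L)" by (simp add: q_def pP)
    finally show ?thesis by (simp only: of_real_eq_iff)
  qed
  have P_range: "- L \<le> P x \<and> P x \<le> 0" if "- L \<le> x" "x \<le> 0" for x
    using forward[of "of_real x"] that by (simp add: memS pP)
  have r_eqs: "r1 = - L" "r3 = r2" "r4 = 0"
    using quartic_nonpos_on_interval[OF lc(2) r] P_range unfolding P_def by auto
  have s_eqs: "s2 = s1" "s4 = s3"
    using quartic_nonneg_on_interval[OF lc(2) s] P_range QP unfolding Q_def P_def by fastforce+
  have "p + [:of_real L:] = q" by (simp add: q_def)
  then have "smult (complex_of_real a)
        ([:of_real L, 1:] * [:- of_real r2, 1:] * [:- of_real r2, 1:] * [:0, 1:]) + [:of_real L:] =
      smult (of_real a)
        ([:- of_real s1, 1:] * [:- of_real s1, 1:] * [:- of_real s3, 1:] * [:- of_real s3, 1:])"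
    unfolding pf qf r_eqs s_eqs by (simp only: of_real_minus minus_minus of_real_0 minus_zero)
  from quartic_double_roots_coeffs[OF _ _ this] lc(2) L
  have "complex_of_real r2 = - of_real (L / 2)" "complex_of_real a = of_real (64 / L ^ 3)"
    by simp_all
  then show ?thesis
    using pf unfolding r_eqs by (simp only: of_real_minus minus_minus of_real_0 minus_zero)
qed

lemma indep_attractor_invariant:
  assumes sg: "simple_graph V E" and "V \<noteq> {}" and att: "indep_attractor_is V E S"
  defines "p \<equiv> indep_polynomial V E - 1"
  shows "\<And>s. s \<in> S \<Longrightarrow> poly p s \<in> S" and "\<And>z. poly p z \<in> S \<Longrightarrow> z \<in> S"
proof -
  have fin: "finite V" and irrefl: "\<And>x. \<not> E x x" using sg by (auto simp: simple_graph_def)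
  define R where "R m = indep_roots (lex_pow_V V m) (lex_adj E)" for m
  have R: "R m = {z. (poly p ^^ m) z = -1}" for m
  proof -
    have "(\<lambda>w. poly (indep_polynomial V E) w - 1) = poly p" by (simp add: p_def fun_eq_iff)
    then show ?thesis unfolding R_def indep_roots_lex_pow[OF fin irrefl] by simp
  qed
  have "finite (R m)" for m
    using poly_roots_finite[OF indep_polynomial_nonzero[OF finite_lex_pow_V[OF fin]]]
    by (simp add: R_def indep_roots_def poly_indep_polynomial[OF finite_lex_pow_V[OF fin]])
  moreover have "compact S" "S \<noteq> {}" "\<forall>\<^sub>F m in sequentially. R m \<noteq> {}"
    "(\<lambda>m. hausdorff_dist (R m) S) \<longlonglongrightarrow> 0"
    using att by (simp_all add: indep_attractor_is_def R_def)
  ultimately have "closed S" and conv: "hausdorff_converges R S"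
    by (simp_all add: compact_imp_closed compact_imp_bounded hausdorff_convergesI)
  have "0 < degree p"
    using indep_number_pos[where E = E, OF fin irrefl \<open>V \<noteq> {}\<close>]
      degree_minus_1(1)[of "indep_polynomial V E"]
    by (simp add: p_def degree_indep_polynomial[OF fin])
  show "poly p s \<in> S" if "s \<in> S" for s
    by (rule hausdorff_limit_of_preimages_forward_invariant[OF R \<open>closed S\<close> conv that])
  show "z \<in> S" if "poly p z \<in> S" for z
    by (rule hausdorff_limit_of_preimages_backward_invariant[OF R \<open>closed S\<close> conv \<open>0 < degree p\<close> that])
qed

lemma indep_polynomial_of_segment_attractor:
  assumes sg: "simple_graph V E" and \<alpha>: "indep_number V E = 4" and \<kappa>: "0 < \<kappa>"
    and att: "indep_attractor_is V E (closed_segment (complex_of_real (- 4 / \<kappa>)) 0)"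
  shows "indep_polynomial V E = cheb_indep_polynomial \<kappa>"
proof -
  define L where "L = 4 / \<kappa>"
  have L: "0 < L" using \<kappa> by (simp add: L_def)
  have fin: "finite V" using sg by (simp add: simple_graph_def)
  have deg: "degree (indep_polynomial V E) = 4" using degree_indep_polynomial[OF fin] \<alpha> by simp
  then have "V \<noteq> {}" by auto
  define p where "p = indep_polynomial V E - 1"
  have dp: "degree p = 4" using deg degree_minus_1(1)[of "indep_polynomial V E"] by (simp add: p_def)
  have lc: "lead_coeff p = of_real (real (indep_count V E 4))"
    using deg dp degree_minus_1(2)[of "indep_polynomial V E"]
    by (simp add: p_def coeff_indep_polynomial[OF fin])
  have "p \<noteq> 0" using dp by auto
  then have "indep_count V E 4 \<noteq> 0"
    using lc by (metis leading_coeff_0_iff of_nat_0 of_real_0 of_real_of_nat_eq)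
  then have pos: "0 < real (indep_count V E 4)" by simp
  have "- 4 / \<kappa> = - L" by (simp add: L_def)
  note invariant = indep_attractor_invariant[OF sg \<open>V \<noteq> {}\<close> att, unfolded this, folded p_def]
  have "indep_polynomial V E = 1 + p" by (simp add: p_def)
  also have "p = smult (of_real (64 / L ^ 3))
      ([:of_real L, 1:] * [:of_real (L / 2), 1:] * [:of_real (L / 2), 1:] * [:0, 1:])"
    by (rule quartic_segment_self_map[OF dp lc pos L invariant])
  also have "1 + \<dots> = cheb_indep_polynomial \<kappa>"
    using \<kappa> by (subst poly_eq_poly_eq_iff[symmetric])
      (simp add: fun_eq_iff poly_cheb_indep_polynomial cheb_quartic_def L_def field_simps
        power2_eq_square power3_eq_cube)
  finally show ?thesis .
qed

section \<open>Disconnected graphs\<close>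

lemma disconnected_indep_polynomial_factors:
  assumes sg: "simple_graph V E" and disc: "\<not> graph_connected V E" and "V \<noteq> {}"
  obtains A where "A \<subseteq> V" "A \<noteq> {}" "V - A \<noteq> {}"
    "indep_polynomial V E = indep_polynomial A E * indep_polynomial (V - A) E"
proof -
  obtain u v where uv: "u \<in> V" "v \<in> V" "\<not> E\<^sup>*\<^sup>* u v"
    using disc \<open>V \<noteq> {}\<close> unfolding graph_connected_def by blast
  define A where "A = {w \<in> V. E\<^sup>*\<^sup>* u w}"
  have sym: "\<And>x y. E x y \<Longrightarrow> E y x" using sg by (simp add: simple_graph_def)
  have no_edge: "\<not> E x y" if "x \<in> A" "y \<in> V - A" for x y
  proof
    assume "E x y"
    then have "E\<^sup>*\<^sup>* u y" using that(1) unfolding A_def by (blast intro: rtranclp.rtrancl_into_rtrancl)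
    then show False using that(2) by (simp add: A_def)
  qed
  have "indep_polynomial V E = indep_polynomial A E * indep_polynomial (V - A) E"
  proof (rule indep_polynomial_no_edges_between)
    show "finite V" using sg by (simp add: simple_graph_def)
    show "A \<subseteq> V" by (simp add: A_def)
    show "\<not> E x y \<and> \<not> E y x" if "x \<in> A" "y \<in> V - A" for x y
      using no_edge[OF that] sym by blast
  qed
  moreover have "u \<in> A" "v \<in> V - A" using uv by (auto simp: A_def)
  moreover have "A \<subseteq> V" by (simp add: A_def)
  ultimately show ?thesis using that[of A] by blast
qed

lemma nat_mult_eq_8:
  fixes x y :: nat
  assumes "x * y = 8"
  shows "(x, y) \<in> {(1, 8), (2, 4), (4, 2), (8, 1)}"
proof -
  have "x \<le> 8" using assms by (metis dvd_imp_le dvd_triv_left zero_less_numeral)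
  then have "x \<in> {0, 1, 2, 3, 4, 5, 6, 7, 8}" by auto
  then show ?thesis using assms by auto presburger+
qed

text \<open>The hypotheses compare the coefficients of \<open>(1 + x w) (1 + y\<^sub>1 w + y\<^sub>2 w\<^sup>2 + y\<^sub>3 w\<^sup>3)\<close>,
  resp. \<open>(1 + x\<^sub>1 w + x\<^sub>2 w\<^sup>2) (1 + y\<^sub>1 w + y\<^sub>2 w\<^sup>2)\<close>, with those of
  \<open>cheb_indep_polynomial k\<close>.\<close>

lemma no_factorization_1_3:
  fixes k x y1 y2 y3 :: nat
  assumes "k \<in> {1, 2}" "x + y1 = 16" "x * y1 + y2 = 20 * k" "x * y2 + y3 = 8 * k ^ 2" "x * y3 = k ^ 3"
  shows False
proof -
  consider "k = 1" | "k = 2" using assms(1) by blast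
  then show False
  proof cases
    case 1
    then show False using assms by auto
  next
    case 2
    then have "(x, y3) \<in> {(1, 8), (2, 4), (4, 2), (8, 1)}" using assms(5) nat_mult_eq_8 by simp
    then show False using 2 assms(2-4) by auto
  qed
qed

lemma no_factorization_2_2:
  fixes k x1 x2 y1 y2 :: nat
  assumes "k \<in> {1, 2}" "x1 + y1 = 16" "x2 + x1 * y1 + y2 = 20 * k" "x2 * y1 + x1 * y2 = 8 * k ^ 2"
    "x2 * y2 = k ^ 3"
  shows False
proof -
  consider "k = 1" | "k = 2" using assms(1) by blast
  then show False
  proof cases
    case 1
    then show False using assms by auto
  next
    case 2
    then have pairs: "(x2, y2) \<in> {(1, 8), (2, 4), (4, 2), (8, 1)}" using assms(5) nat_mult_eq_8 by simp
    then have "31 \<le> x1 * y1" using 2 assms(3) by auto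
    then have "x1 \<noteq> 0" "y1 \<noteq> 0" by (intro notI, simp)+
    then show False using pairs 2 assms(2,4) by auto presburger+
  qed
qed

lemma nat_convolution_ne_cheb_coeffs:
  fixes a b c :: "nat \<Rightarrow> nat"
  assumes "k \<in> {1, 2}" "a 0 = 1" "b 0 = 1" "\<forall>i>d. a i = 0" "\<forall>i>4 - d. b i = 0" "1 \<le> d" "d \<le> 3"
    and conv: "\<And>n. n \<le> 4 \<Longrightarrow> c n = (\<Sum>i\<le>n. a i * b (n - i))"
  shows "(c 1, c 2, c 3, c 4) \<noteq> (16, 20 * k, 8 * k ^ 2, k ^ 3)"
proof
  assume "(c 1, c 2, c 3, c 4) = (16, 20 * k, 8 * k ^ 2, k ^ 3)"
  then have v: "c 1 = 16" "c 2 = 20 * k" "c 3 = 8 * k ^ 2" "c 4 = k ^ 3" by simp_all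
  have c: "a 1 + b 1 = c 1" "a 2 + a 1 * b 1 + b 2 = c 2" "a 3 + a 2 * b 1 + a 1 * b 2 + b 3 = c 3"
    "a 4 + a 3 * b 1 + a 2 * b 2 + a 1 * b 3 + b 4 = c 4"
    using conv[of 1] conv[of 2] conv[of 3] conv[of 4] assms(2,3) by (simp_all add: numeral_eq_Suc)
  consider "d = 1" | "d = 2" | "d = 3" using assms(6,7) by linarith
  then show False
  proof cases
    case 1
    then show False using c v assms(4,5) by (intro no_factorization_1_3[OF assms(1)]) simp_all
  next
    case 2
    then show False using c v assms(4,5) by (intro no_factorization_2_2[OF assms(1)]) simp_all
  next
    case 3
    then show False using c v assms(4,5)
      by (intro no_factorization_1_3[OF assms(1), of "b 1" "a 1" "a 2" "a 3"]) (simp_all add: mult.commute)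
  qed
qed

lemma indep_count_mult:
  assumes "finite V" "finite A" "finite B"
    and "indep_polynomial V E = indep_polynomial A E * indep_polynomial B E"
  shows "indep_count V E n = (\<Sum>i\<le>n. indep_count A E i * indep_count B E (n - i))"
proof -
  have "of_nat (indep_count V E n) = coeff (indep_polynomial A E * indep_polynomial B E) n"
    using assms(1,4) by (simp add: coeff_indep_polynomial flip: assms(4))
  also have "\<dots> = of_nat (\<Sum>i\<le>n. indep_count A E i * indep_count B E (n - i))"
    using assms(2,3) by (simp add: coeff_mult coeff_indep_polynomial)
  finally show ?thesis by (simp only: of_nat_eq_iff)
qed

lemma indep_counts_cheb_indep_polynomial:
  assumes "finite V" "indep_polynomial V E = cheb_indep_polynomial (real k)"
  shows "(indep_count V E 1, indep_count V E 2, indep_count V E 3, indep_count V E 4) =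
           (16, 20 * k, 8 * k ^ 2, k ^ 3)"
proof -
  have "of_nat (indep_count V E n) = coeff (cheb_indep_polynomial (real k)) n" for n
    using assms by (simp add: coeff_indep_polynomial flip: assms(2))
  then show ?thesis
    by (simp add: cheb_indep_polynomial_def numeral_eq_Suc flip: of_nat_eq_iff[where 'a = complex])
qed

lemma disconnected_indep_polynomial_ne_cheb:
  assumes sg: "simple_graph V E" and disc: "\<not> graph_connected V E" and k: "k \<in> {1, 2}"
  shows "indep_polynomial V E \<noteq> cheb_indep_polynomial (real k)"
proof
  assume P: "indep_polynomial V E = cheb_indep_polynomial (real k)"
  have fin: "finite V" and irrefl: "\<And>x. \<not> E x x" using sg by (auto simp: simple_graph_def)
  have "V \<noteq> {}"
  proof
    assume "V = {}"
    then have "cheb_indep_polynomial (real k) = 1" using P by simp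
    then show False by (simp add: cheb_indep_polynomial_def one_pCons)
  qed
  obtain A where A: "A \<subseteq> V" "A \<noteq> {}" "V - A \<noteq> {}"
    and split: "indep_polynomial V E = indep_polynomial A E * indep_polynomial (V - A) E"
    using disconnected_indep_polynomial_factors[OF sg disc \<open>V \<noteq> {}\<close>] by blast
  have finA: "finite A" and finB: "finite (V - A)" using fin A(1) finite_subset by auto
  have "0 < indep_number A E" "0 < indep_number (V - A) E"
    using indep_number_pos[where E = E, OF finA irrefl A(2)] indep_number_pos[where E = E, OF finB irrefl A(3)]
    by simp_all
  moreover have "indep_number A E + indep_number (V - A) E = 4"
    using k arg_cong[OF split, of degree] finA finB
    by (auto simp: P cheb_indep_polynomial_def degree_mult_eq indep_polynomial_nonzero degree_indep_polynomial)
  ultimately have "(indep_count V E 1, indep_count V E 2, indep_count V E 3, indep_count V E 4)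
      \<noteq> (16, 20 * k, 8 * k ^ 2, k ^ 3)"
    using k indep_count_above_indep_number[OF finA] indep_count_above_indep_number[OF finB]
      indep_count_mult[OF fin finA finB split]
    by (intro nat_convolution_ne_cheb_coeffs[where d = "indep_number A E"])
      (simp_all add: indep_count_0 finA finB)
  then show False using indep_counts_cheb_indep_polynomial[OF fin P] by contradiction
qed

theorem theoremC:
  shows "(\<forall>k::nat. 1 \<le> k \<and> k \<le> 4 \<longrightarrow>
           (\<exists>(V::nat set) E. simple_graph V E \<and> indep_number V E = 4 \<and>
              indep_attractor_is V E (closed_segment (complex_of_real (- 4 / real k)) 0)))
       \<and> (\<forall>k::nat. k \<in> {1, 2} \<longrightarrow>
           \<not> (\<exists>(V::'a set) E. simple_graph V E \<and> \<not> graph_connected V E \<and> indep_number V E = 4 \<and>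
              indep_attractor_is V E (closed_segment (complex_of_real (- 4 / real k)) 0)))"
proof (intro conjI allI impI)
  fix k :: nat
  assume "1 \<le> k \<and> k \<le> 4"
  then have "k \<in> {1, 2, 3, 4}" by auto
  then show "\<exists>(V::nat set) E. simple_graph V E \<and> indep_number V E = 4 \<and>
      indep_attractor_is V E (closed_segment (complex_of_real (- 4 / real k)) 0)"
    by (rule cograph_segment_attractor)
next
  fix k :: nat
  assume k: "k \<in> {1, 2}"
  show "\<not> (\<exists>(V::'a set) E. simple_graph V E \<and> \<not> graph_connected V E \<and> indep_number V E = 4 \<and>
      indep_attractor_is V E (closed_segment (complex_of_real (- 4 / real k)) 0))"
  proof (intro notI, elim exE conjE)
    fix V :: "'a set" and E
    assume sg: "simple_graph V E" and disc: "\<not> graph_connected V E" and \<alpha>: "indep_number V E = 4"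
      and att: "indep_attractor_is V E (closed_segment (complex_of_real (- 4 / real k)) 0)"
    have "indep_polynomial V E = cheb_indep_polynomial (real k)"
      using k by (intro indep_polynomial_of_segment_attractor[OF sg \<alpha> _ att]) auto
    then show False using disconnected_indep_polynomial_ne_cheb[OF sg disc k] by contradiction
  qed
qed

end
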